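(* Let $\rho_0>0$, $n\in\mathbb{N}$, $y_0\in\mathbb{R}^n$, and let $f:\mathbb{R}_{>0}\times\mathbb{C}^n\to\mathbb{C}^n$ be continuous. Assume there is $c\geq0$ such that $|f(t,y_1)-f(t,y_2)|\leq c|y_1-y_2|$ for all $y_1,y_2\in\mathbb{C}^n$ and $t>0$, and that $(t\mapsto f(t,0))\in L^2_{\rho_0}(\mathbb{R}_{>0};\mathbb{C}^n)$. Define $\tilde f:\mathbb{R}\times\mathbb{C}^n\to\mathbb{C}^n$ by $\tilde f(t,y):=f(t,y)$ if $t>0$ and $\tilde f(t,y):=0$ otherwise. Then the mapping $F:C_c^\infty(\mathbb{R};\mathbb{C}^n)\to C(\mathbb{R};\mathbb{C}^n)$, $F(\varphi)(t):=\tilde f(t,\varphi(t)+y_0)$, is eventually $(0,0)$-Lipschitz continuous.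
   Context: For $\rho\in\mathbb{R}$, $L^2_\rho(\mathbb{R};\mathbb{C}^n)$ is the space of measurable $g$ with $\int|g(t)|^2e^{-2\rho t}dt<\infty$ (similarly on $\mathbb{R}_{>0}$); this coincides with the space $H^0_\rho(\mathbb{R};\mathbb{C}^n)$ with norm $\|\cdot\|_{\rho,0}=\|\cdot\|_{L^2_\rho}$. Definition: a map $F$ defined on a domain containing $C_c^\infty(\mathbb{R};\mathbb{C}^n)$ is eventually $(0,0)$-Lipschitz continuous if there is $\nu\geq\rho_0$ such that for each $\rho\geq\nu$, $F$ takes values in $L^2_\rho(\mathbb{R};\mathbb{C}^n)$ and has a Lipschitz continuous extension $F_\rho:L^2_\rho(\mathbb{R};\mathbb{C}^n)\to L^2_\rho(\mathbb{R};\mathbb{C}^n)$ with $\sup_{\rho\geq\nu}|F_\rho|_{\mathrm{Lip}}<\infty$. *)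

theory Defs
  imports "HOL-Analysis.Analysis"
begin

definition vderiv :: "(real \<Rightarrow> 'a::real_normed_vector) \<Rightarrow> real \<Rightarrow> 'a" where
  "vderiv g = (\<lambda>t. vector_derivative g (at t))"

definition Cc_inf :: "(real \<Rightarrow> 'a::real_normed_vector) set" where
  "Cc_inf = {\<phi>. (\<forall>k t. (vderiv ^^ k) \<phi> differentiable (at t))
               \<and> compact (closure {t. \<phi> t \<noteq> 0})}"

definition L2w :: "real \<Rightarrow> (real \<Rightarrow> 'a::{real_normed_vector,second_countable_topology}) set" where
  "L2w \<rho> = {g. g \<in> borel_measurable lborel
               \<and> integrable lborel (\<lambda>t. (norm (g t))\<^sup>2 * exp (-2 * \<rho> * t))}"

definition L2w_pos :: "real \<Rightarrow> (real \<Rightarrow> 'a::{real_normed_vector,second_countable_topology}) set" where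
  "L2w_pos \<rho> = {g. set_borel_measurable lborel {0<..} g
               \<and> set_integrable lborel {0<..} (\<lambda>t. (norm (g t))\<^sup>2 * exp (-2 * \<rho> * t))}"

definition L2w_norm :: "real \<Rightarrow> (real \<Rightarrow> 'a::real_normed_vector) \<Rightarrow> real" where
  "L2w_norm \<rho> g = sqrt (\<integral>t. (norm (g t))\<^sup>2 * exp (-2 * \<rho> * t) \<partial>lborel)"

text \<open>Elements of L^2_rho
  are represented by functions; the extension F_rho agrees with F on C_c^infinity as
  elements of L^2_rho, i.e. almost everywhere.\<close>
definition eventually_Lip00 ::
  "real \<Rightarrow> ((real \<Rightarrow> 'a::{real_normed_vector,second_countable_topology}) \<Rightarrow> (real \<Rightarrow> 'a)) \<Rightarrow> bool" where
  "eventually_Lip00 \<rho>\<^sub>0 F \<longleftrightarrow>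
     (\<exists>\<nu> \<ge> \<rho>\<^sub>0. \<exists>L::real. \<forall>\<rho> \<ge> \<nu>.
        (\<forall>\<phi> \<in> Cc_inf. F \<phi> \<in> L2w \<rho>) \<and>
        (\<exists>F\<rho>. (\<forall>g \<in> L2w \<rho>. F\<rho> g \<in> L2w \<rho>)
             \<and> (\<forall>\<phi> \<in> Cc_inf. AE t in lborel. F\<rho> \<phi> t = F \<phi> t)
             \<and> (\<forall>g \<in> L2w \<rho>. \<forall>h \<in> L2w \<rho>.
                   L2w_norm \<rho> (\<lambda>t. F\<rho> g t - F\<rho> h t) \<le> L * L2w_norm \<rho> (\<lambda>t. g t - h t))))"

end

(* F is the superposition operator of h t y = f~ t (y + y0), which is c-Lipschitz in y
   uniformly in t; so |F g - F k| <= c |g - k| pointwise, and F is c-Lipschitz on every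
   L^2_rho.  F maps L^2_rho into itself for rho >= rho0 since |h t y| <= |h t 0| + c |y| and
   |h t 0| <= |f~ t 0| + c |y0| on t > 0: the first term lies in L^2_rho because the weight
   e^(-2 rho t) decreases in rho on t > 0, the second because rho > 0.  Thus nu = rho0 and
   F_rho = F work. *)
theory Submission
  imports Defs
begin

lemma L2w_borel_measurable: "g \<in> L2w \<rho> \<Longrightarrow> g \<in> borel_measurable lborel"
  by (simp add: L2w_def)

lemma integrable_real_nonneg_bound:
  fixes f g :: "'a \<Rightarrow> real"
  assumes "integrable M f" "g \<in> borel_measurable M" "\<And>x. 0 \<le> g x" "\<And>x. g x \<le> f x"
  shows "integrable M g"
  using assms(1,2)
proof (rule Bochner_Integration.integrable_bound)
  show "AE x in M. norm (g x) \<le> norm (f x)"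
    using assms(3,4) by (intro AE_I2) (metis abs_ge_self abs_of_nonneg order_trans real_norm_def)
qed

lemma L2w_dominated:
  fixes u :: "real \<Rightarrow> 'a::{real_normed_vector,second_countable_topology}"
    and v :: "real \<Rightarrow> 'b::{real_normed_vector,second_countable_topology}"
    and w :: "real \<Rightarrow> 'c::{real_normed_vector,second_countable_topology}"
  assumes u: "u \<in> borel_measurable lborel" and v: "v \<in> L2w \<rho>" and w: "w \<in> L2w \<rho>"
    and "a \<ge> 0" "b \<ge> 0" and bound: "\<And>t. norm (u t) \<le> a * norm (v t) + b * norm (w t)"
  shows "u \<in> L2w \<rho>"
proof -
  let ?e = "\<lambda>t. exp (-2 * \<rho> * t)"
  have "integrable lborel (\<lambda>t. 2 * a\<^sup>2 * ((norm (v t))\<^sup>2 * ?e t) + 2 * b\<^sup>2 * ((norm (w t))\<^sup>2 * ?e t))"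
    using v w by (auto simp: L2w_def)
  then have "integrable lborel (\<lambda>t. (norm (u t))\<^sup>2 * ?e t)"
  proof (rule integrable_real_nonneg_bound)
    show "(\<lambda>t. (norm (u t))\<^sup>2 * ?e t) \<in> borel_measurable lborel"
      using u by measurable
    fix t
    have "(norm (u t))\<^sup>2 \<le> (a * norm (v t) + b * norm (w t))\<^sup>2"
      using bound[of t] by (intro power_mono) auto
    also have "\<dots> \<le> 2 * a\<^sup>2 * (norm (v t))\<^sup>2 + 2 * b\<^sup>2 * (norm (w t))\<^sup>2"
      using zero_le_square[of "a * norm (v t) - b * norm (w t)"]
      by (simp add: power2_eq_square algebra_simps)
    finally have "(norm (u t))\<^sup>2 * ?e t \<le> (2 * a\<^sup>2 * (norm (v t))\<^sup>2 + 2 * b\<^sup>2 * (norm (w t))\<^sup>2) * ?e t"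
      by (rule mult_right_mono) simp
    then show "(norm (u t))\<^sup>2 * ?e t \<le> 2 * a\<^sup>2 * ((norm (v t))\<^sup>2 * ?e t) + 2 * b\<^sup>2 * ((norm (w t))\<^sup>2 * ?e t)"
      by (simp add: distrib_right mult.assoc)
  qed simp
  then show ?thesis
    using u by (simp add: L2w_def)
qed

lemma L2w_diff:
  fixes g h :: "real \<Rightarrow> 'a::{real_normed_vector,second_countable_topology}"
  assumes "g \<in> L2w \<rho>" "h \<in> L2w \<rho>"
  shows "(\<lambda>t. g t - h t) \<in> L2w \<rho>"
proof (rule L2w_dominated[where v = g and w = h and a = 1 and b = 1])
  show "(\<lambda>t. g t - h t) \<in> borel_measurable lborel"
    using assms[THEN L2w_borel_measurable] by measurable
qed (use assms in \<open>simp_all add: norm_triangle_ineq4\<close>)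

lemma integrable_exp_decay_pos:
  assumes "(a::real) > 0"
  shows "integrable lborel (\<lambda>t. indicator {0<..} t * exp (- a * t))"
proof -
  have "integrable lebesgue (\<lambda>t. indicat_real {0..} t *\<^sub>R exp (- a * t))"
    using assms
    by (intro nonnegative_absolutely_integrable_1 [unfolded set_integrable_def]
        integrable_on_exp_minus_to_infinity) auto
  then have "integrable lborel (\<lambda>t. indicat_real {0..} t *\<^sub>R exp (- a * t))"
    by (subst (asm) integrable_completion) auto
  then show ?thesis
    by (rule Bochner_Integration.integrable_bound) (auto simp: indicator_def)
qed

lemma L2w_indicator_const:
  fixes y :: "'a::{real_normed_vector,second_countable_topology}"
  assumes "\<rho> > 0"
  shows "(\<lambda>t. indicator {0<..} t *\<^sub>R y) \<in> L2w \<rho>"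
proof -
  have "integrable lborel (\<lambda>t. (norm y)\<^sup>2 * (indicator {0<..} t * exp (- (2 * \<rho>) * t)))"
    using integrable_exp_decay_pos[of "2 * \<rho>"] assms by simp
  also have "(\<lambda>t. (norm y)\<^sup>2 * (indicator {0<..} t * exp (- (2 * \<rho>) * t)))
      = (\<lambda>t. (norm (indicator {0<..} t *\<^sub>R y))\<^sup>2 * exp (-2 * \<rho> * t))"
    by (simp add: fun_eq_iff indicator_def)
  finally show ?thesis
    by (simp add: L2w_def)
qed

lemma L2w_pos_zero_extension:
  fixes g :: "real \<Rightarrow> 'a::{real_normed_vector,second_countable_topology}"
  assumes g: "g \<in> L2w_pos \<rho>\<^sub>0" and "\<rho>\<^sub>0 \<le> \<rho>"
  shows "(\<lambda>t. if t > 0 then g t else 0) \<in> L2w \<rho>"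
proof -
  have ext: "(\<lambda>t. if t > 0 then g t else 0) = (\<lambda>t. indicator {0<..} t *\<^sub>R g t)"
    by (auto simp: indicator_def)
  have meas: "(\<lambda>t. indicator {0<..} t *\<^sub>R g t) \<in> borel_measurable lborel"
    using g by (simp add: L2w_pos_def set_borel_measurable_def)
  have "integrable lborel (\<lambda>t. indicator {0<..} t *\<^sub>R ((norm (g t))\<^sup>2 * exp (-2 * \<rho>\<^sub>0 * t)))"
    using g by (simp add: L2w_pos_def set_integrable_def)
  then have "integrable lborel (\<lambda>t. (norm (indicator {0<..} t *\<^sub>R g t))\<^sup>2 * exp (-2 * \<rho> * t))"
  proof (rule integrable_real_nonneg_bound)
    show "(\<lambda>t. (norm (indicator {0<..} t *\<^sub>R g t))\<^sup>2 * exp (-2 * \<rho> * t)) \<in> borel_measurable lborel"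
      using meas by measurable
    fix t
    show "(norm (indicator {0<..} t *\<^sub>R g t))\<^sup>2 * exp (-2 * \<rho> * t)
        \<le> indicator {0<..} t *\<^sub>R ((norm (g t))\<^sup>2 * exp (-2 * \<rho>\<^sub>0 * t))"
      using \<open>\<rho>\<^sub>0 \<le> \<rho>\<close> by (cases "t > 0") (simp_all add: mult_left_mono)
  qed simp
  then show ?thesis
    using meas by (simp add: ext L2w_def)
qed

lemma Cc_inf_subset_L2w: "Cc_inf \<subseteq> L2w \<rho>"
proof
  fix \<phi> :: "real \<Rightarrow> 'a::{real_normed_vector,second_countable_topology}"
  assume "\<phi> \<in> Cc_inf"
  then have "\<And>t. \<phi> differentiable (at t)" and supp: "compact (closure {t. \<phi> t \<noteq> 0})"
    unfolding Cc_inf_def by (auto simp del: funpow.simps dest: spec[of _ 0])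
  then have cont: "continuous_on UNIV \<phi>"
    by (simp add: continuous_at_imp_continuous_on differentiable_imp_continuous_within)
  define S where "S = closure {t. \<phi> t \<noteq> 0}"
  have "continuous_on S (\<lambda>t. (norm (\<phi> t))\<^sup>2 * exp (-2 * \<rho> * t))"
    by (intro continuous_intros continuous_on_subset[OF cont]) auto
  then have "integrable lborel (\<lambda>t. indicator S t *\<^sub>R ((norm (\<phi> t))\<^sup>2 * exp (-2 * \<rho> * t)))"
    using supp unfolding S_def[symmetric] by (rule borel_integrable_compact[rotated])
  also have "(\<lambda>t. indicator S t *\<^sub>R ((norm (\<phi> t))\<^sup>2 * exp (-2 * \<rho> * t)))
      = (\<lambda>t. (norm (\<phi> t))\<^sup>2 * exp (-2 * \<rho> * t))"
    using closure_subset[of "{t. \<phi> t \<noteq> 0}"] by (auto simp: fun_eq_iff indicator_def S_def)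
  finally show "\<phi> \<in> L2w \<rho>"
    using cont by (simp add: L2w_def borel_measurable_continuous_onI)
qed

lemma borel_measurable_zero_extension:
  fixes f :: "real \<Rightarrow> 'a::topological_space \<Rightarrow> 'b::real_normed_vector"
  assumes "continuous_on ({0<..} \<times> UNIV) (\<lambda>(t, y). f t y)"
  shows "(\<lambda>(t, y). if t > 0 then f t y else 0) \<in> borel_measurable borel"
proof -
  have "(\<lambda>p. indicator ({0<..} \<times> UNIV) p *\<^sub>R (\<lambda>(t, y). f t y) p) \<in> borel_measurable borel"
    by (rule borel_measurable_continuous_on_indicator[OF _ assms]) (intro borel_open open_Times; simp)
  also have "(\<lambda>p. indicator ({0<..} \<times> UNIV) p *\<^sub>R (\<lambda>(t, y). f t y) p)
      = (\<lambda>(t, y). if t > 0 then f t y else 0)"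
    by (auto simp: fun_eq_iff indicator_def)
  finally show ?thesis .
qed

lemma borel_measurable_superposition:
  fixes h :: "real \<Rightarrow> 'a::second_countable_topology \<Rightarrow> 'b::topological_space"
  assumes "(\<lambda>(t, y). h t y) \<in> borel_measurable borel" and "g \<in> borel_measurable lborel"
  shows "(\<lambda>t. h t (g t)) \<in> borel_measurable lborel"
proof -
  have "(\<lambda>t. (t, g t)) \<in> borel_measurable lborel"
    using assms(2) by measurable
  from measurable_compose[OF this assms(1)] show ?thesis
    by simp
qed

lemma L2w_zero_extension_Lipschitz:
  fixes f :: "real \<Rightarrow> 'a::{real_normed_vector,second_countable_topology}
      \<Rightarrow> 'b::{real_normed_vector,second_countable_topology}"
  assumes cont: "continuous_on ({0<..} \<times> UNIV) (\<lambda>(t, y). f t y)"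
    and "c \<ge> 0" and lip: "\<And>t. t > 0 \<Longrightarrow> norm (f t y - f t 0) \<le> c * norm y"
    and f0: "(\<lambda>t. f t 0) \<in> L2w_pos \<rho>\<^sub>0" and "\<rho>\<^sub>0 \<le> \<rho>" "\<rho> > 0"
  shows "(\<lambda>t. if t > 0 then f t y else 0) \<in> L2w \<rho>"
proof (rule L2w_dominated[where a = 1 and b = c])
  show "(\<lambda>t. if t > 0 then f t y else 0) \<in> borel_measurable lborel"
    using borel_measurable_superposition[OF borel_measurable_zero_extension[OF cont], of "\<lambda>_. y"]
    by simp
  show "(\<lambda>t. if t > 0 then f t 0 else 0) \<in> L2w \<rho>"
    using f0 \<open>\<rho>\<^sub>0 \<le> \<rho>\<close> by (rule L2w_pos_zero_extension)
  show "(\<lambda>t. indicator {0<..} t *\<^sub>R y) \<in> L2w \<rho>"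
    using \<open>\<rho> > 0\<close> by (rule L2w_indicator_const)
  show "norm (if t > 0 then f t y else 0)
      \<le> 1 * norm (if t > 0 then f t 0 else 0) + c * norm (indicator {0<..} t *\<^sub>R y)" for t
    using lip[of t] norm_triangle_ineq2[of "f t y" "f t 0"] by auto
qed (use \<open>c \<ge> 0\<close> in auto)

lemma L2w_superposition:
  fixes h :: "real \<Rightarrow> 'a::{real_normed_vector,second_countable_topology}
      \<Rightarrow> 'b::{real_normed_vector,second_countable_topology}"
  assumes meas: "(\<lambda>(t, y). h t y) \<in> borel_measurable borel"
    and "c \<ge> 0" and lip: "\<And>t x y. norm (h t x - h t y) \<le> c * norm (x - y)"
    and "(\<lambda>t. h t 0) \<in> L2w \<rho>" and g: "g \<in> L2w \<rho>"
  shows "(\<lambda>t. h t (g t)) \<in> L2w \<rho>"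
proof (rule L2w_dominated[where v = "\<lambda>t. h t 0" and w = g and a = 1 and b = c])
  show "(\<lambda>t. h t (g t)) \<in> borel_measurable lborel"
    using meas L2w_borel_measurable[OF g] by (rule borel_measurable_superposition)
  show "norm (h t (g t)) \<le> 1 * norm (h t 0) + c * norm (g t)" for t
    using lip[of t "g t" 0] norm_triangle_ineq2[of "h t (g t)" "h t 0"] by simp
qed (use assms in auto)

lemma L2w_norm_superposition_le:
  fixes h :: "real \<Rightarrow> 'a::{real_normed_vector,second_countable_topology} \<Rightarrow> 'b::real_normed_vector"
  assumes "c \<ge> 0" and lip: "\<And>t x y. norm (h t x - h t y) \<le> c * norm (x - y)"
    and "g \<in> L2w \<rho>" "k \<in> L2w \<rho>"
  shows "L2w_norm \<rho> (\<lambda>t. h t (g t) - h t (k t)) \<le> c * L2w_norm \<rho> (\<lambda>t. g t - k t)"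
proof -
  let ?e = "\<lambda>t. exp (-2 * \<rho> * t)"
  have "integrable lborel (\<lambda>t. (norm (g t - k t))\<^sup>2 * ?e t)"
    using L2w_diff[OF assms(3,4)] by (simp add: L2w_def)
  then have "(\<integral>t. (norm (h t (g t) - h t (k t)))\<^sup>2 * ?e t \<partial>lborel)
      \<le> (\<integral>t. c\<^sup>2 * ((norm (g t - k t))\<^sup>2 * ?e t) \<partial>lborel)"
  proof (rule integral_mono'[OF integrable_mult_right])
    fix t
    have "(norm (h t (g t) - h t (k t)))\<^sup>2 \<le> (c * norm (g t - k t))\<^sup>2"
      using lip[of t "g t" "k t"] by (intro power_mono) auto
    then show "(norm (h t (g t) - h t (k t)))\<^sup>2 * ?e t \<le> c\<^sup>2 * ((norm (g t - k t))\<^sup>2 * ?e t)"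
      by (simp add: power_mult_distrib mult.assoc[symmetric])
  qed simp
  also have "\<dots> = c\<^sup>2 * (\<integral>t. (norm (g t - k t))\<^sup>2 * ?e t \<partial>lborel)"
    by simp
  finally have "sqrt (\<integral>t. (norm (h t (g t) - h t (k t)))\<^sup>2 * ?e t \<partial>lborel)
      \<le> sqrt (c\<^sup>2 * (\<integral>t. (norm (g t - k t))\<^sup>2 * ?e t \<partial>lborel))"
    by (rule real_sqrt_le_mono)
  then show ?thesis
    using \<open>c \<ge> 0\<close> by (simp add: L2w_norm_def real_sqrt_mult)
qed

theorem proposition6p1:
  fixes \<rho>\<^sub>0 :: real and y\<^sub>0 :: "complex ^ 'n"
    and f :: "real \<Rightarrow> complex ^ 'n \<Rightarrow> complex ^ 'n"
  assumes "\<rho>\<^sub>0 > 0"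
    and "\<forall>i. Im (y\<^sub>0 $ i) = 0"
    and "continuous_on ({0<..} \<times> UNIV) (\<lambda>(t, y). f t y)"
    and "\<exists>c \<ge> 0. \<forall>t > 0. \<forall>y1 y2. norm (f t y1 - f t y2) \<le> c * norm (y1 - y2)"
    and "(\<lambda>t. f t 0) \<in> L2w_pos \<rho>\<^sub>0"
  shows "eventually_Lip00 \<rho>\<^sub>0
           (\<lambda>\<phi> t. (\<lambda>t y. if t > 0 then f t y else 0) t (\<phi> t + y\<^sub>0))"
proof -
  obtain c where "c \<ge> 0" and f_lip: "\<And>t y1 y2. t > 0 \<Longrightarrow> norm (f t y1 - f t y2) \<le> c * norm (y1 - y2)"
    using assms(4) by blast
  define h where "h t y = (if t > 0 then f t (y + y\<^sub>0) else 0)" for t y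
  have "continuous_on ({0<..} \<times> UNIV) (\<lambda>p. (fst p, snd p + y\<^sub>0))"
    by (intro continuous_intros)
  from continuous_on_compose2[OF assms(3) this]
  have "continuous_on ({0<..} \<times> UNIV) (\<lambda>(t, y). f t (y + y\<^sub>0))"
    by (simp add: split_beta image_subset_iff)
  then have h_meas: "(\<lambda>(t, y). h t y) \<in> borel_measurable borel"
    unfolding h_def by (rule borel_measurable_zero_extension)
  have h_lip: "norm (h t x - h t y) \<le> c * norm (x - y)" for t x y
    using f_lip[of t "x + y\<^sub>0" "y + y\<^sub>0"] \<open>c \<ge> 0\<close> by (simp add: h_def)
  have h_at_0: "(\<lambda>t. h t 0) = (\<lambda>t. if t > 0 then f t y\<^sub>0 else 0)"
    by (simp add: h_def fun_eq_iff)
  have h0: "(\<lambda>t. h t 0) \<in> L2w \<rho>" if "\<rho>\<^sub>0 \<le> \<rho>" for \<rho>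
    unfolding h_at_0
    by (rule L2w_zero_extension_Lipschitz[OF assms(3) \<open>c \<ge> 0\<close> _ assms(5) that])
      (use f_lip[of _ y\<^sub>0 0] that assms(1) in auto)
  have superposition_L2w: "(\<lambda>t. h t (g t)) \<in> L2w \<rho>" if "\<rho>\<^sub>0 \<le> \<rho>" "g \<in> L2w \<rho>" for g \<rho>
    using L2w_superposition[OF h_meas \<open>c \<ge> 0\<close> h_lip h0] that by blast
  have F_eq: "(\<lambda>\<phi> t. (\<lambda>t y. if t > 0 then f t y else 0) t (\<phi> t + y\<^sub>0)) = (\<lambda>\<phi> t. h t (\<phi> t))"
    by (simp add: h_def fun_eq_iff)
  show ?thesis
    unfolding eventually_Lip00_def F_eq
    by (rule exI[of _ \<rho>\<^sub>0], rule conjI[OF order.refl], rule exI[of _ c],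
        intro allI impI conjI ballI exI[of _ "\<lambda>g t. h t (g t)"] AE_I2 refl)
      (auto intro: superposition_L2w L2w_norm_superposition_le[OF \<open>c \<ge> 0\<close> h_lip]
        Cc_inf_subset_L2w[THEN subsetD])
qed

end
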